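(* Let \(E\in\mathcal{B}_\infty\) be \(\sigma\)-finite for \(\mu\). Then \((E,\mu)\) is purely nonatomic.
   Context: Let $\mathcal{B}$ be the Borel $\sigma$-algebra of $\mathbb{R}$, $\lambda$ the Lebesgue measure, and $\mathcal{B}_{\infty}$ the $\sigma$-algebra on $\mathbb{R}^{\mathbb{N}}$ generated by the cylinder sets $\prod_{i=1}^{m}C_{i}\times\prod_{i=m+1}^{\infty}\mathbb{R}$ with $C_i\in\mathcal{B}$, $m\in\mathbb{N}$. Let $\mathcal{F}(\mathcal{B},\lambda)$ be the set of finite rectangles $\prod_{i\in\mathbb{N}}C_{i}$ with $C_i\in\mathcal{B}$ and $\prod_{i}\lambda(C_i)\in[0,\infty)$, with $\mathrm{vol}(\prod_{i}C_i):=\prod_i\lambda(C_i)$. The measure $\mu$ is the restriction to $\mathcal{B}_{\infty}$ of the outer measure $\mu^{\ast}(A):=\inf\{\sum_{n}\mathrm{vol}(\mathscr{C}_{n}) : \mathscr{C}_{n}\in\mathcal{F}(\mathcal{B},\lambda),\ A\subset\bigcup_{n}\mathscr{C}_{n}\}$ ($\inf\varnothing=\infty$). A measure space is purely nonatomic if it has no atoms, i.e., no measurable $A$ with positive measure such that every measurable $B\subset A$ has measure $0$ or that of $A$. *)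

theory Defs
  imports "HOL-Analysis.Analysis"
begin

definition cylinders :: "(nat \<Rightarrow> real) set set" where
  "cylinders = {{x. \<forall>i<m. x i \<in> C i} | C m. \<forall>i. C i \<in> sets borel}"

definition B_inf :: "(nat \<Rightarrow> real) set set" where
  "B_inf = sigma_sets UNIV cylinders"

definition rect :: "(nat \<Rightarrow> real set) \<Rightarrow> (nat \<Rightarrow> real) set" where
  "rect C = {x. \<forall>i. x i \<in> C i}"

definition vol :: "(nat \<Rightarrow> real set) \<Rightarrow> ennreal" where
  "vol C = lim (\<lambda>m. \<Prod>i<m. emeasure lborel (C i))"

definition finite_rect :: "(nat \<Rightarrow> real set) \<Rightarrow> bool" where
  "finite_rect C \<longleftrightarrow> (\<forall>i. C i \<in> sets borel) \<and>
     (\<exists>v. v < \<infinity> \<and> ((\<lambda>m. \<Prod>i<m. emeasure lborel (C i)) \<longlongrightarrow> v) sequentially)"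

definition mu_outer :: "(nat \<Rightarrow> real) set \<Rightarrow> ennreal" where
  "mu_outer A = (INF R \<in> {R :: nat \<Rightarrow> nat \<Rightarrow> real set.
       (\<forall>n. finite_rect (R n)) \<and> A \<subseteq> (\<Union>n. rect (R n))}. (\<Sum>n. vol (R n)))"

end

theory Submission
  imports Defs
begin

(* Cover an atom A of finite measure by finite rectangles R n of finite total volume.
   Shrinking the first side of R n to length L leaves a rectangle of volume at most
   min (vol (R n)) (r n * L), where r n is the volume contributed by the other sides, so by
   monotone convergence the shrunken cover has total volume below mu A once L is small.
   Countably many slabs {x. x 0 \<in> [z L, z L + L)} cover A, and an atom has full measure in
   one of them (null sets are closed under countable unions); that slab is covered by the
   shrunken rectangles, a contradiction. So every atom has infinite measure, and an atom
   inside E = (\<Union>n. F n) would have full, hence infinite, measure in some F n. *)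

lemma sigma_algebra_B_inf: "sigma_algebra UNIV B_inf"
  unfolding B_inf_def by (rule sigma_algebra_sigma_sets) auto

lemma coordinate_preimage_in_B_inf:
  assumes "I \<in> sets borel"
  shows "{x. x i \<in> I} \<in> B_inf"
proof -
  have "{x. x i \<in> I} = {x. \<forall>j<Suc i. x j \<in> ((\<lambda>_. UNIV)(i := I)) j}"
    by auto
  moreover have "\<forall>j. ((\<lambda>_. UNIV)(i := I)) j \<in> sets borel"
    using assms by simp
  ultimately have "{x. x i \<in> I} \<in> cylinders"
    unfolding cylinders_def by blast
  then show ?thesis
    unfolding B_inf_def by (rule sigma_sets.Basic)
qed

lemma mu_outer_mono: "A \<subseteq> B \<Longrightarrow> mu_outer A \<le> mu_outer B"
  unfolding mu_outer_def by (rule INF_superset_mono) auto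

lemma mu_outer_le_cover:
  assumes "\<And>n. finite_rect (R n)" and "A \<subseteq> (\<Union>n. rect (R n))"
  shows "mu_outer A \<le> (\<Sum>n. vol (R n))"
  unfolding mu_outer_def by (rule INF_lower) (use assms in auto)

lemma mu_outer_less_cover:
  assumes "mu_outer A < c"
  obtains R where "\<And>n. finite_rect (R n)" and "A \<subseteq> (\<Union>n. rect (R n))"
    and "(\<Sum>n. vol (R n)) < c"
  using assms unfolding mu_outer_def INF_less_iff by auto

lemma mu_outer_UN_le: "mu_outer (\<Union>j. A j) \<le> (\<Sum>j. mu_outer (A j))"
proof (rule ennreal_le_epsilon)
  fix e :: real assume "0 < e" and "(\<Sum>j. mu_outer (A j)) < top"
  then have "mu_outer (A j) < mu_outer (A j) + e * (1/2) ^ Suc j" for j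
    by (auto simp: less_top dest!: ennreal_suminf_lessD)
  then have "\<exists>R. (\<forall>n. finite_rect (R n)) \<and> A j \<subseteq> (\<Union>n. rect (R n)) \<and>
      (\<Sum>n. vol (R n)) \<le> mu_outer (A j) + e * (1/2) ^ Suc j" for j
    by (rule mu_outer_less_cover) (blast intro: less_imp_le)
  then obtain R where R: "\<And>j n. finite_rect (R j n)" "\<And>j. A j \<subseteq> (\<Union>n. rect (R j n))"
    and R_le: "\<And>j. (\<Sum>n. vol (R j n)) \<le> mu_outer (A j) + e * (1/2) ^ Suc j"
    by metis
  define C where "C = case_prod R \<circ> prod_decode"
  have "(\<Union>j. A j) \<subseteq> (\<Union>k. rect (C k))"
    using R(2) by (auto simp: C_def subset_eq) (metis prod.case prod_encode_inverse)
  then have "mu_outer (\<Union>j. A j) \<le> (\<Sum>k. vol (C k))"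
    by (rule mu_outer_le_cover[rotated]) (simp add: C_def split_def R(1))
  also have "\<dots> = (\<Sum>j. \<Sum>n. vol (R j n))"
    unfolding C_def comp_def by (rule suminf_ennreal_2dimen) simp
  also have "\<dots> \<le> (\<Sum>j. mu_outer (A j) + e * (1/2) ^ Suc j)"
    by (intro suminf_le R_le) auto
  also have "\<dots> = (\<Sum>j. mu_outer (A j)) + (\<Sum>j. ennreal e * ennreal ((1/2) ^ Suc j))"
    using \<open>0 < e\<close> by (subst suminf_add[symmetric])
      (auto simp del: ennreal_suminf_cmult simp add: ennreal_mult[symmetric])
  also have "\<dots> = (\<Sum>j. mu_outer (A j)) + e"
    unfolding ennreal_suminf_cmult
    by (subst suminf_ennreal_eq[OF zero_le_power power_half_series]) auto
  finally show "mu_outer (\<Union>j. A j) \<le> (\<Sum>j. mu_outer (A j)) + e" .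
qed

lemma mu_outer_UN_null:
  fixes A :: "'i::countable \<Rightarrow> (nat \<Rightarrow> real) set"
  assumes "\<And>i. mu_outer (A i) = 0"
  shows "mu_outer (\<Union>i. A i) = 0"
proof -
  have "(\<Union>i. A i) = (\<Union>n. A (from_nat n))"
    by (metis image_image surj_from_nat)
  also have "mu_outer \<dots> \<le> (\<Sum>n. mu_outer (A (from_nat n)))"
    by (rule mu_outer_UN_le)
  finally show ?thesis
    using assms by simp
qed

lemma ennreal_tendsto_infinity_mult_imp_eventually_zero:
  fixes f :: "'a \<Rightarrow> ennreal"
  assumes "((\<lambda>x. \<infinity> * f x) \<longlongrightarrow> v) F" and "v < \<infinity>"
  shows "eventually (\<lambda>x. f x = 0) F"
proof -
  have "eventually (\<lambda>x. \<infinity> * f x < \<infinity>) F"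
    using order_tendstoD(2)[OF assms] .
  then show ?thesis
    by eventually_elim (simp add: ennreal_mult_less_top)
qed

lemma ennreal_tendsto_cancel_cmult:
  fixes c v :: ennreal and f :: "'a \<Rightarrow> ennreal"
  assumes "c \<noteq> 0" and "c \<noteq> \<infinity>" and "((\<lambda>x. c * f x) \<longlongrightarrow> v) F"
  shows "(f \<longlongrightarrow> v / c) F"
proof -
  have "((\<lambda>x. inverse c * (c * f x)) \<longlongrightarrow> inverse c * v) F"
    using assms by (intro ennreal_tendsto_cmult) (simp_all add: less_top[symmetric])
  moreover have "inverse c * (c * f x) = f x" for x
    using assms by (simp add: mult.commute[of "inverse c"] mult.commute[of c] ennreal_mult_divide_eq
        flip: divide_ennreal_def)
  ultimately show ?thesis
    by (simp add: divide_ennreal_def mult.commute)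
qed

lemma ennreal_tendsto_cmult_le_factor:
  fixes a v :: ennreal and Q :: "nat \<Rightarrow> ennreal"
  assumes lim: "(\<lambda>m. a * Q m) \<longlonglongrightarrow> v" and "v < \<infinity>"
  obtains r where "r < \<infinity>"
    and "\<And>b. b \<le> a \<Longrightarrow> (\<lambda>m. b * Q m) \<longlonglongrightarrow> b * r"
    and "\<And>b. b \<le> a \<Longrightarrow> b * r \<le> v"
proof (cases "a = 0 \<or> a = \<infinity>")
  case True
  have vanishing: "eventually (\<lambda>m. b * Q m = 0) sequentially" if "b \<le> a" for b
  proof (cases "a = 0")
    case True
    with that show ?thesis
      by simp
  next
    case False
    with \<open>a = 0 \<or> a = \<infinity>\<close> lim have "(\<lambda>m. \<infinity> * Q m) \<longlonglongrightarrow> v"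
      by simp
    then have "eventually (\<lambda>m. Q m = 0) sequentially"
      using \<open>v < \<infinity>\<close> by (rule ennreal_tendsto_infinity_mult_imp_eventually_zero)
    then show ?thesis
      by (rule eventually_mono) simp
  qed
  show ?thesis
  proof (rule that[of 0])
    fix b assume "b \<le> a"
    then show "(\<lambda>m. b * Q m) \<longlonglongrightarrow> b * 0"
      using vanishing by (simp add: tendsto_eventually)
  qed simp_all
next
  case False
  then have "a \<noteq> 0" and "a \<noteq> \<infinity>"
    by simp_all
  define r where "r = v / a"
  have lim_r: "Q \<longlonglongrightarrow> r"
    unfolding r_def using \<open>a \<noteq> 0\<close> \<open>a \<noteq> \<infinity>\<close> lim by (rule ennreal_tendsto_cancel_cmult)
  show ?thesis
  proof (rule that)
    show "r < \<infinity>"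
      using \<open>a \<noteq> 0\<close> \<open>v < \<infinity>\<close> unfolding r_def divide_ennreal_def
      by (simp add: ennreal_mult_eq_top_iff less_top[symmetric])
    fix b assume "b \<le> a"
    then have "b < top"
      using \<open>a \<noteq> \<infinity>\<close> by (simp add: le_less_trans less_top)
    then show "(\<lambda>m. b * Q m) \<longlonglongrightarrow> b * r"
      by (intro ennreal_tendsto_cmult lim_r)
    have "b * r \<le> a * r"
      using \<open>b \<le> a\<close> by (rule mult_right_mono) simp
    also have "a * r = v"
      using \<open>a \<noteq> 0\<close> \<open>a \<noteq> \<infinity>\<close> unfolding r_def
      by (simp add: ennreal_times_divide mult.commute[of a] ennreal_mult_divide_eq)
    finally show "b * r \<le> v" .
  qed
qed

lemma LIMSEQ_prod_update_0:
  fixes f :: "nat \<Rightarrow> ennreal"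
  assumes f: "(\<lambda>m. \<Prod>i<m. f i) \<longlonglongrightarrow> v" and "v < \<infinity>"
  obtains r where "r < \<infinity>"
    and "\<And>b. b \<le> f 0 \<Longrightarrow> (\<lambda>m. \<Prod>i<m. (f(0 := b)) i) \<longlonglongrightarrow> b * r"
    and "\<And>b. b \<le> f 0 \<Longrightarrow> b * r \<le> v"
proof -
  define Q where "Q m = (\<Prod>i<m. f (Suc i))" for m
  have prod_Suc: "(\<Prod>i<Suc m. (f(0 := b)) i) = b * Q m" for b m
    unfolding Q_def by (subst prod.lessThan_Suc_shift) simp
  have lim_Q: "(\<lambda>m. f 0 * Q m) \<longlonglongrightarrow> v"
    using LIMSEQ_Suc[OF f] prod_Suc[of "f 0"] by simp
  obtain r where "r < \<infinity>" and lim_b: "\<And>b. b \<le> f 0 \<Longrightarrow> (\<lambda>m. b * Q m) \<longlonglongrightarrow> b * r"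
    and "\<And>b. b \<le> f 0 \<Longrightarrow> b * r \<le> v"
    using ennreal_tendsto_cmult_le_factor[OF lim_Q \<open>v < \<infinity>\<close>] by blast
  moreover have "(\<lambda>m. \<Prod>i<m. (f(0 := b)) i) \<longlonglongrightarrow> b * r" if "b \<le> f 0" for b
    using lim_b[OF that] unfolding prod_Suc[symmetric] by (rule LIMSEQ_imp_Suc)
  ultimately show ?thesis
    using that by blast
qed

lemma finite_rect_update_0:
  assumes "finite_rect C"
  shows "\<exists>r<\<infinity>. \<forall>S \<in> sets borel. S \<subseteq> C 0 \<longrightarrow>
    finite_rect (C(0 := S)) \<and> vol (C(0 := S)) = emeasure lborel S * r \<and> vol (C(0 := S)) \<le> vol C"
proof -
  let ?f = "\<lambda>i. emeasure lborel (C i)"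
  obtain v where sides: "\<And>i. C i \<in> sets borel" and "v < \<infinity>"
    and lim: "(\<lambda>m. \<Prod>i<m. ?f i) \<longlonglongrightarrow> v"
    using assms unfolding finite_rect_def by blast
  obtain r where "r < \<infinity>"
    and lim_update: "\<And>b. b \<le> ?f 0 \<Longrightarrow> (\<lambda>m. \<Prod>i<m. (?f(0 := b)) i) \<longlonglongrightarrow> b * r"
    and update_le: "\<And>b. b \<le> ?f 0 \<Longrightarrow> b * r \<le> v"
    using LIMSEQ_prod_update_0[OF lim \<open>v < \<infinity>\<close>] by blast
  have "vol C = v"
    unfolding vol_def using lim by (rule limI)
  have "finite_rect (C(0 := S)) \<and> vol (C(0 := S)) = emeasure lborel S * r \<and> vol (C(0 := S)) \<le> vol C"
    if "S \<in> sets borel" and "S \<subseteq> C 0" for S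
  proof -
    let ?b = "emeasure lborel S"
    have b_le: "?b \<le> ?f 0"
      using sides that by (intro emeasure_mono) auto
    have sides_S: "(\<lambda>i. emeasure lborel ((C(0 := S)) i)) = ?f(0 := ?b)"
      by auto
    have lim_S: "(\<lambda>m. \<Prod>i<m. emeasure lborel ((C(0 := S)) i)) \<longlonglongrightarrow> ?b * r"
      unfolding sides_S by (rule lim_update[OF b_le])
    then have "vol (C(0 := S)) = ?b * r"
      unfolding vol_def by (rule limI)
    moreover have "?b * r \<le> v"
      by (rule update_le[OF b_le])
    moreover have "finite_rect (C(0 := S))"
      unfolding finite_rect_def
      using sides \<open>S \<in> sets borel\<close> lim_S \<open>?b * r \<le> v\<close> \<open>v < \<infinity>\<close> by (auto intro: le_less_trans)
    ultimately show ?thesis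
      using \<open>vol C = v\<close> by simp
  qed
  with \<open>r < \<infinity>\<close> show ?thesis
    by blast
qed

lemma finite_rect_update_0_Int_le:
  assumes "finite_rect C"
  obtains r where "r < \<infinity>"
    and "\<And>I L. I \<in> sets borel \<Longrightarrow> emeasure lborel I \<le> ennreal L \<Longrightarrow>
      finite_rect (C(0 := C 0 \<inter> I)) \<and> vol (C(0 := C 0 \<inter> I)) \<le> min (vol C) (r * ennreal L)"
proof -
  obtain r where "r < \<infinity>" and update: "\<forall>S \<in> sets borel. S \<subseteq> C 0 \<longrightarrow> finite_rect (C(0 := S)) \<and>
      vol (C(0 := S)) = emeasure lborel S * r \<and> vol (C(0 := S)) \<le> vol C"
    using finite_rect_update_0[OF assms] by blast
  have "C 0 \<in> sets borel"
    using assms unfolding finite_rect_def by blast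
  show ?thesis
  proof (rule that[OF \<open>r < \<infinity>\<close>])
    fix I :: "real set" and L :: real
    assume "I \<in> sets borel" and "emeasure lborel I \<le> ennreal L"
    then have "C 0 \<inter> I \<in> sets borel"
      using \<open>C 0 \<in> sets borel\<close> by simp
    then have "finite_rect (C(0 := C 0 \<inter> I))"
      and vol_eq: "vol (C(0 := C 0 \<inter> I)) = emeasure lborel (C 0 \<inter> I) * r"
      and vol_le: "vol (C(0 := C 0 \<inter> I)) \<le> vol C"
      using update by blast+
    have "emeasure lborel (C 0 \<inter> I) \<le> emeasure lborel I"
      using \<open>I \<in> sets borel\<close> by (intro emeasure_mono) auto
    also have "\<dots> \<le> ennreal L"
      by fact
    finally have "vol (C(0 := C 0 \<inter> I)) \<le> ennreal L * r"
      unfolding vol_eq by (rule mult_right_mono) simp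
    with vol_le \<open>finite_rect (C(0 := C 0 \<inter> I))\<close>
    show "finite_rect (C(0 := C 0 \<inter> I)) \<and> vol (C(0 := C 0 \<inter> I)) \<le> min (vol C) (r * ennreal L)"
      by (simp add: mult.commute)
  qed
qed

lemma mu_outer_slab_le:
  assumes R: "\<And>n. finite_rect (R n)" and cover: "A \<subseteq> (\<Union>n. rect (R n))"
  obtains r where "\<And>n. r n < \<infinity>"
    and "\<And>I L. I \<in> sets borel \<Longrightarrow> emeasure lborel I \<le> ennreal L \<Longrightarrow>
      mu_outer (A \<inter> {x. x 0 \<in> I}) \<le> (\<Sum>n. min (vol (R n)) (r n * ennreal L))"
proof -
  have "\<forall>n. \<exists>r<\<infinity>. \<forall>I L. I \<in> sets borel \<longrightarrow> emeasure lborel I \<le> ennreal L \<longrightarrow>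
      finite_rect ((R n)(0 := R n 0 \<inter> I)) \<and>
      vol ((R n)(0 := R n 0 \<inter> I)) \<le> min (vol (R n)) (r * ennreal L)"
    by (intro allI, rule finite_rect_update_0_Int_le[OF R]) blast
  from choice[OF this] obtain r where r_spec: "\<forall>n. r n < \<infinity> \<and>
      (\<forall>I L. I \<in> sets borel \<longrightarrow> emeasure lborel I \<le> ennreal L \<longrightarrow>
        finite_rect ((R n)(0 := R n 0 \<inter> I)) \<and>
        vol ((R n)(0 := R n 0 \<inter> I)) \<le> min (vol (R n)) (r n * ennreal L))"
    by blast
  show ?thesis
  proof (rule that)
    show "r n < \<infinity>" for n
      using r_spec by blast
    fix I :: "real set" and L :: real
    assume "I \<in> sets borel" and "emeasure lborel I \<le> ennreal L"
    then have R': "finite_rect ((R n)(0 := R n 0 \<inter> I))"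
      and vol_le: "vol ((R n)(0 := R n 0 \<inter> I)) \<le> min (vol (R n)) (r n * ennreal L)" for n
      using r_spec by blast+
    have "A \<inter> {x. x 0 \<in> I} \<subseteq> (\<Union>n. rect ((R n)(0 := R n 0 \<inter> I)))"
      using cover unfolding rect_def by fastforce
    then have "mu_outer (A \<inter> {x. x 0 \<in> I}) \<le> (\<Sum>n. vol ((R n)(0 := R n 0 \<inter> I)))"
      by (rule mu_outer_le_cover[OF R'])
    also have "\<dots> \<le> (\<Sum>n. min (vol (R n)) (r n * ennreal L))"
      by (intro suminf_le vol_le) auto
    finally show "mu_outer (A \<inter> {x. x 0 \<in> I}) \<le> (\<Sum>n. min (vol (R n)) (r n * ennreal L))" .
  qed
qed

lemma suminf_min_cmult_less:
  fixes w r :: "nat \<Rightarrow> ennreal"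
  assumes "(\<Sum>n. w n) < \<infinity>" and "\<And>n. r n < \<infinity>" and "0 < c"
  obtains L :: real where "0 < L" and "(\<Sum>n. min (w n) (r n * ennreal L)) < c"
proof -
  define g where "g k n = min (w n) (r n * ennreal (1 / Suc k))" for k n
  have "decseq g"
  proof (rule decseq_SucI, rule le_funI)
    fix k n
    have "ennreal (1 / Suc (Suc k)) \<le> ennreal (1 / Suc k)"
      by (intro ennreal_leI frac_le) auto
    then show "g (Suc k) n \<le> g k n"
      unfolding g_def by (intro min.mono order.refl mult_left_mono) auto
  qed
  have "(\<integral>\<^sup>+ n. g 0 n \<partial>count_space UNIV) \<le> (\<Sum>n. w n)"
    unfolding nn_integral_count_space_nat g_def by (intro suminf_le summableI) auto
  then have g0_finite: "(\<integral>\<^sup>+ n. g 0 n \<partial>count_space UNIV) < \<infinity>"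
    using assms(1) by (rule le_less_trans)
  have g_vanishes: "(INF k. g k n) = 0" for n
  proof -
    have "(\<lambda>k. r n * ennreal (1 / Suc k)) \<longlonglongrightarrow> r n * ennreal 0"
      using assms(2) by (intro ennreal_tendsto_cmult tendsto_ennrealI LIMSEQ_Suc lim_1_over_n) simp
    moreover have "(INF k. g k n) \<le> r n * ennreal (1 / Suc k)" for k
      unfolding g_def by (rule INF_lower2[of k]) auto
    ultimately have "(INF k. g k n) \<le> 0"
      by (intro LIMSEQ_le_const) auto
    then show ?thesis
      by simp
  qed
  have "(INF k. \<Sum>n. g k n) = (INF k. \<integral>\<^sup>+ n. g k n \<partial>count_space UNIV)"
    by (simp add: nn_integral_count_space_nat)
  also have "\<dots> = (\<integral>\<^sup>+ n. (INF k. g k n) \<partial>count_space UNIV)"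
    by (rule nn_integral_monotone_convergence_INF_decseq[symmetric, OF \<open>decseq g\<close> _ g0_finite]) simp
  also have "\<dots> = 0"
    by (simp add: g_vanishes)
  finally obtain k where "(\<Sum>n. g k n) < c"
    using assms(3) by (metis INF_less_iff)
  then show ?thesis
    by (intro that[of "1 / Suc k"]) (auto simp: g_def)
qed

lemma UN_int_atLeastLessThan_eq_UNIV:
  fixes L :: real
  assumes "0 < L"
  shows "(\<Union>z::int. {of_int z * L ..< of_int z * L + L}) = UNIV"
proof -
  have "t \<in> (\<Union>z::int. {of_int z * L ..< of_int z * L + L})" for t
  proof -
    define z where "z = \<lfloor>t / L\<rfloor>"
    have "of_int z \<le> t / L" and "t / L < of_int z + 1"
      unfolding z_def by linarith+
    then have "of_int z * L \<le> t" and "t < of_int z * L + L"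
      using assms by (simp_all add: field_simps)
    then have "t \<in> {of_int z * L ..< of_int z * L + L}"
      by simp
    then show ?thesis
      by blast
  qed
  then show ?thesis
    by (simp add: set_eq_iff)
qed

definition mu_atom :: "(nat \<Rightarrow> real) set \<Rightarrow> bool" where
  "mu_atom A \<longleftrightarrow> A \<in> B_inf \<and> 0 < mu_outer A \<and>
     (\<forall>B. B \<in> B_inf \<and> B \<subseteq> A \<longrightarrow> mu_outer B = 0 \<or> mu_outer B = mu_outer A)"

lemma mu_atom_split:
  fixes B :: "'i::countable \<Rightarrow> (nat \<Rightarrow> real) set"
  assumes "mu_atom A" and "A \<subseteq> (\<Union>i. B i)" and "\<And>i. B i \<in> B_inf"
  obtains i where "mu_outer (A \<inter> B i) = mu_outer A"
proof -
  interpret B_inf: sigma_algebra UNIV B_inf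
    by (rule sigma_algebra_B_inf)
  have "A \<inter> B i \<in> B_inf" for i
    using assms(1,3) unfolding mu_atom_def by (intro B_inf.Int) auto
  then have "mu_outer (A \<inter> B i) = 0 \<or> mu_outer (A \<inter> B i) = mu_outer A" for i
    using assms(1) unfolding mu_atom_def by blast
  moreover have "\<not> (\<forall>i. mu_outer (A \<inter> B i) = 0)"
  proof
    assume "\<forall>i. mu_outer (A \<inter> B i) = 0"
    then have "mu_outer (\<Union>i. A \<inter> B i) = 0"
      by (intro mu_outer_UN_null) blast
    moreover have "(\<Union>i. A \<inter> B i) = A"
      using assms(2) by blast
    ultimately show False
      using assms(1) unfolding mu_atom_def by simp
  qed
  ultimately show ?thesis
    using that by blast
qed

lemma mu_atom_infinite:
  assumes "mu_atom A"
  shows "mu_outer A = \<infinity>"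
proof (rule ccontr)
  assume "mu_outer A \<noteq> \<infinity>"
  then obtain R where R: "\<And>n. finite_rect (R n)" and cover: "A \<subseteq> (\<Union>n. rect (R n))"
    and "(\<Sum>n. vol (R n)) < \<infinity>"
    using mu_outer_less_cover[of A \<infinity>] by (auto simp: less_top)
  obtain r where r: "\<And>n. r n < \<infinity>"
    and slab_le: "\<And>I L. I \<in> sets borel \<Longrightarrow> emeasure lborel I \<le> ennreal L \<Longrightarrow>
      mu_outer (A \<inter> {x. x 0 \<in> I}) \<le> (\<Sum>n. min (vol (R n)) (r n * ennreal L))"
    using mu_outer_slab_le[OF R cover] by blast
  have "0 < mu_outer A"
    using assms by (simp add: mu_atom_def)
  then obtain L where "0 < L" and small: "(\<Sum>n. min (vol (R n)) (r n * ennreal L)) < mu_outer A"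
    by (rule suminf_min_cmult_less[OF \<open>(\<Sum>n. vol (R n)) < \<infinity>\<close> r])
  define I where "I z = {of_int z * L ..< of_int z * L + L}" for z :: int
  have I_borel: "I z \<in> sets borel" for z
    unfolding I_def by simp
  have "A \<subseteq> (\<Union>z. {x. x 0 \<in> I z})"
    using UN_int_atLeastLessThan_eq_UNIV[OF \<open>0 < L\<close>] unfolding I_def by blast
  moreover have "{x. x 0 \<in> I z} \<in> B_inf" for z
    by (rule coordinate_preimage_in_B_inf[OF I_borel])
  ultimately obtain z where "mu_outer (A \<inter> {x. x 0 \<in> I z}) = mu_outer A"
    by (rule mu_atom_split[OF assms])
  moreover have "mu_outer (A \<inter> {x. x 0 \<in> I z}) \<le> (\<Sum>n. min (vol (R n)) (r n * ennreal L))"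
    using I_borel \<open>0 < L\<close> by (intro slab_le) (simp_all add: I_def)
  ultimately show False
    using small by simp
qed

theorem corollaryA6:
  fixes E :: "(nat \<Rightarrow> real) set"
  assumes "E \<in> B_inf"
    and "\<exists>F :: nat \<Rightarrow> (nat \<Rightarrow> real) set.
           (\<forall>n. F n \<in> B_inf \<and> F n \<subseteq> E \<and> mu_outer (F n) < \<infinity>) \<and> E = (\<Union>n. F n)"
  shows "\<not> (\<exists>A. A \<in> B_inf \<and> A \<subseteq> E \<and> mu_outer A > 0 \<and>
            (\<forall>B. B \<in> B_inf \<and> B \<subseteq> A \<longrightarrow> mu_outer B = 0 \<or> mu_outer B = mu_outer A))"
proof
  assume "\<exists>A. A \<in> B_inf \<and> A \<subseteq> E \<and> mu_outer A > 0 \<and>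
            (\<forall>B. B \<in> B_inf \<and> B \<subseteq> A \<longrightarrow> mu_outer B = 0 \<or> mu_outer B = mu_outer A)"
  then obtain A where "A \<in> B_inf" "A \<subseteq> E" "0 < mu_outer A"
    and "\<forall>B. B \<in> B_inf \<and> B \<subseteq> A \<longrightarrow> mu_outer B = 0 \<or> mu_outer B = mu_outer A"
    by blast
  then have "mu_atom A"
    unfolding mu_atom_def by blast
  from assms(2) obtain F :: "nat \<Rightarrow> (nat \<Rightarrow> real) set"
    where F: "\<forall>n. F n \<in> B_inf \<and> F n \<subseteq> E \<and> mu_outer (F n) < \<infinity>" and "E = (\<Union>n. F n)"
    by blast
  then have A_cover: "A \<subseteq> (\<Union>n. F n)" and F_B_inf: "\<And>n. F n \<in> B_inf"
    using \<open>A \<subseteq> E\<close> by blast+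
  obtain n where "mu_outer (A \<inter> F n) = mu_outer A"
    by (rule mu_atom_split[OF \<open>mu_atom A\<close> A_cover F_B_inf])
  also have "\<dots> = \<infinity>"
    by (rule mu_atom_infinite[OF \<open>mu_atom A\<close>])
  finally have "mu_outer (F n) < mu_outer (A \<inter> F n)"
    using F by simp
  moreover have "mu_outer (A \<inter> F n) \<le> mu_outer (F n)"
    by (rule mu_outer_mono) blast
  ultimately show False
    by simp
qed

end
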